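(* Let $\tau$ be an arithmetic signature and let $Q \subseteq \mathrm{STRUC}[\tau]$ be a $\tau$-problem. For each first-order $\tau$-formula $\phi$ (i.e. $\phi \in \mathrm{FO}[+,\times]$) that describes $Q$ eventually, there are quantifier-free $\tau$-formulas $\alpha$ and $\beta$ such that $(\alpha \land \phi) \lor \beta$ describes $Q$.
   Context: Signatures are finite and contain relation symbols and constant symbols, and possibly the special unary function symbol $\mathrm{succ}$; all structures are finite. A signature $\tau$ is arithmetic if it contains the binary relation $<$, the ternary relations $\mathrm{add}$ and $\mathrm{mult}$, the unary function symbol $\mathrm{succ}$ and the constant symbol $0$; in that case $\mathrm{STRUC}[\tau]$ denotes the class of finite $\tau$-structures in which $<$ is a linear order of the universe and $\mathrm{add}$, $\mathrm{mult}$, $\mathrm{succ}$, $0$ have their natural meaning with respect to this order (identifying the universe with $\{0,\dots,n-1\}$ via the order; $0$ is the minimum and the successor of the maximum element is itself). $\mathrm{FO}[+,\times]$ denotes first-order formulas over arithmetic signatures. A $\tau$-problem is a set $Q \subseteq \mathrm{STRUC}[\tau]$ closed under isomorphism. A $\tau$-sentence $\phi$ describes $Q$ if $Q = \{\mathcal A \in \mathrm{STRUC}[\tau] \mid \mathcal A \models \phi\}$, and it describes $Q$ eventually if there is a number $m$ such that for all $\mathcal A \in \mathrm{STRUC}[\tau]$ whose universe has at least $m$ elements we have $\mathcal A \models \phi$ iff $\mathcal A \in Q$. *)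

theory Defs
  imports Main
begin

datatype rsym = LessS | AddS | MultS | RS string
datatype csym = ZeroS | CS string

record sig =
  rels :: "rsym \<Rightarrow> nat option"
  cnsts :: "csym set"
  has_succ :: bool

definition arithmetic_sig :: "sig \<Rightarrow> bool" where
  "arithmetic_sig \<tau> \<longleftrightarrow>
     finite (dom (rels \<tau>)) \<and> finite (cnsts \<tau>) \<and>
     rels \<tau> LessS = Some 2 \<and> rels \<tau> AddS = Some 3 \<and> rels \<tau> MultS = Some 3 \<and>
     ZeroS \<in> cnsts \<tau> \<and> has_succ \<tau>"

datatype trm = Var nat | Const csym | Succ trm

datatype fm =
    Eq trm trm
  | Rel rsym "trm list"
  | Neg fm
  | Conj fm fm
  | Disj fm fm
  | Ex nat fm
  | All nat fm

fun fv_trm :: "trm \<Rightarrow> nat set" where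
  "fv_trm (Var i) = {i}"
| "fv_trm (Const c) = {}"
| "fv_trm (Succ t) = fv_trm t"

fun fv :: "fm \<Rightarrow> nat set" where
  "fv (Eq s t) = fv_trm s \<union> fv_trm t"
| "fv (Rel r ts) = (\<Union>t\<in>set ts. fv_trm t)"
| "fv (Neg \<phi>) = fv \<phi>"
| "fv (Conj \<phi> \<psi>) = fv \<phi> \<union> fv \<psi>"
| "fv (Disj \<phi> \<psi>) = fv \<phi> \<union> fv \<psi>"
| "fv (Ex i \<phi>) = fv \<phi> - {i}"
| "fv (All i \<phi>) = fv \<phi> - {i}"

fun qfree :: "fm \<Rightarrow> bool" where
  "qfree (Eq s t) = True"
| "qfree (Rel r ts) = True"
| "qfree (Neg \<phi>) = qfree \<phi>"
| "qfree (Conj \<phi> \<psi>) = (qfree \<phi> \<and> qfree \<psi>)"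
| "qfree (Disj \<phi> \<psi>) = (qfree \<phi> \<and> qfree \<psi>)"
| "qfree (Ex i \<phi>) = False"
| "qfree (All i \<phi>) = False"

fun sig_trm :: "sig \<Rightarrow> trm \<Rightarrow> bool" where
  "sig_trm \<tau> (Var i) = True"
| "sig_trm \<tau> (Const c) = (c \<in> cnsts \<tau>)"
| "sig_trm \<tau> (Succ t) = (has_succ \<tau> \<and> sig_trm \<tau> t)"

fun sig_fm :: "sig \<Rightarrow> fm \<Rightarrow> bool" where
  "sig_fm \<tau> (Eq s t) = (sig_trm \<tau> s \<and> sig_trm \<tau> t)"
| "sig_fm \<tau> (Rel r ts) = (rels \<tau> r = Some (length ts) \<and> (\<forall>t\<in>set ts. sig_trm \<tau> t))"
| "sig_fm \<tau> (Neg \<phi>) = sig_fm \<tau> \<phi>"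
| "sig_fm \<tau> (Conj \<phi> \<psi>) = (sig_fm \<tau> \<phi> \<and> sig_fm \<tau> \<psi>)"
| "sig_fm \<tau> (Disj \<phi> \<psi>) = (sig_fm \<tau> \<phi> \<and> sig_fm \<tau> \<psi>)"
| "sig_fm \<tau> (Ex i \<phi>) = sig_fm \<tau> \<phi>"
| "sig_fm \<tau> (All i \<phi>) = sig_fm \<tau> \<phi>"

definition sig_sentence :: "sig \<Rightarrow> fm \<Rightarrow> bool" where
  "sig_sentence \<tau> \<phi> \<longleftrightarrow> sig_fm \<tau> \<phi> \<and> fv \<phi> = {}"

text \<open>Since in STRUC[tau] the order is a linear order of the universe with respect to which
  the arithmetic symbols have their natural meaning, every such structure is isomorphic to a
  unique one whose universe is {0,...,n-1} with the natural order. We therefore represent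
  structures canonically on {0..<n} (n \<ge> 1, since the constant 0 must be interpreted).
  Symbols outside the signature get a fixed dummy interpretation, so that distinct
  representations are non-isomorphic structures.\<close>

record struc =
  size :: nat
  relI :: "rsym \<Rightarrow> nat list set"
  constI :: "csym \<Rightarrow> nat"

definition STRUC :: "sig \<Rightarrow> struc set" where
  "STRUC \<tau> = {A. size A \<ge> 1 \<and>
     (\<forall>r. case rels \<tau> r of
            None \<Rightarrow> relI A r = {}
          | Some k \<Rightarrow> relI A r \<subseteq> {xs. length xs = k \<and> (\<forall>x\<in>set xs. x < size A)}) \<and>
     (\<forall>c. if c \<in> cnsts \<tau> then constI A c < size A else constI A c = 0) \<and>
     relI A LessS = {[a, b] | a b. a < b \<and> b < size A} \<and>
     relI A AddS = {[a, b, c] | a b c. a + b = c \<and> a < size A \<and> b < size A \<and> c < size A} \<and>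
     relI A MultS = {[a, b, c] | a b c. a * b = c \<and> a < size A \<and> b < size A \<and> c < size A} \<and>
     constI A ZeroS = 0}"

text \<open>succ is interpreted as the natural successor; the successor of the maximum is itself.\<close>

fun eval_trm :: "struc \<Rightarrow> (nat \<Rightarrow> nat) \<Rightarrow> trm \<Rightarrow> nat" where
  "eval_trm A e (Var i) = e i"
| "eval_trm A e (Const c) = constI A c"
| "eval_trm A e (Succ t) = min (eval_trm A e t + 1) (size A - 1)"

fun sat :: "struc \<Rightarrow> (nat \<Rightarrow> nat) \<Rightarrow> fm \<Rightarrow> bool" where
  "sat A e (Eq s t) = (eval_trm A e s = eval_trm A e t)"
| "sat A e (Rel r ts) = (map (eval_trm A e) ts \<in> relI A r)"
| "sat A e (Neg \<phi>) = (\<not> sat A e \<phi>)"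
| "sat A e (Conj \<phi> \<psi>) = (sat A e \<phi> \<and> sat A e \<psi>)"
| "sat A e (Disj \<phi> \<psi>) = (sat A e \<phi> \<or> sat A e \<psi>)"
| "sat A e (Ex i \<phi>) = (\<exists>a < size A. sat A (e(i := a)) \<phi>)"
| "sat A e (All i \<phi>) = (\<forall>a < size A. sat A (e(i := a)) \<phi>)"

text \<open>Truth of a sentence (assignment irrelevant; we use the all-zero one).\<close>

definition models :: "struc \<Rightarrow> fm \<Rightarrow> bool" where
  "models A \<phi> \<longleftrightarrow> sat A (\<lambda>_. 0) \<phi>"

definition problem :: "sig \<Rightarrow> struc set \<Rightarrow> bool" where
  "problem \<tau> Q \<longleftrightarrow> Q \<subseteq> STRUC \<tau>"

definition describes :: "sig \<Rightarrow> fm \<Rightarrow> struc set \<Rightarrow> bool" where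
  "describes \<tau> \<phi> Q \<longleftrightarrow> sig_sentence \<tau> \<phi> \<and> Q = {A \<in> STRUC \<tau>. models A \<phi>}"

definition describes_eventually :: "sig \<Rightarrow> fm \<Rightarrow> struc set \<Rightarrow> bool" where
  "describes_eventually \<tau> \<phi> Q \<longleftrightarrow> sig_sentence \<tau> \<phi> \<and>
     (\<exists>m. \<forall>A \<in> STRUC \<tau>. size A \<ge> m \<longrightarrow> (models A \<phi> \<longleftrightarrow> A \<in> Q))"

end

theory Submission
  imports Defs
begin

text \<open>A structure of size at most m is determined by which atomic sentences built from the
  numerals 0, succ 0, ..., succ^m 0 it satisfies. Hence every set of such small structures is
  defined by a Boolean combination \<beta> of these finitely many atoms, while \<alpha> says that the size
  exceeds the threshold beyond which \<phi> is correct.\<close>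

lemma STRUC_D:
  assumes "A \<in> STRUC \<tau>"
  shows "size A \<ge> 1" and "constI A ZeroS = 0"
    and "c \<in> cnsts \<tau> \<Longrightarrow> constI A c < size A" and "c \<notin> cnsts \<tau> \<Longrightarrow> constI A c = 0"
    and "rels \<tau> r = None \<Longrightarrow> relI A r = {}"
    and "rels \<tau> r = Some k \<Longrightarrow> relI A r \<subseteq> {xs. length xs = k \<and> (\<forall>x\<in>set xs. x < size A)}"
proof -
  have "size A \<ge> 1 \<and> constI A ZeroS = 0 \<and>
      (\<forall>c. if c \<in> cnsts \<tau> then constI A c < size A else constI A c = 0) \<and>
      (\<forall>r. case rels \<tau> r of None \<Rightarrow> relI A r = {}
         | Some k \<Rightarrow> relI A r \<subseteq> {xs. length xs = k \<and> (\<forall>x\<in>set xs. x < size A)})"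
    using assms unfolding STRUC_def mem_Collect_eq by (elim conjE) (intro conjI; assumption)
  then have "if c \<in> cnsts \<tau> then constI A c < size A else constI A c = 0"
    and "case rels \<tau> r of None \<Rightarrow> relI A r = {}
         | Some k \<Rightarrow> relI A r \<subseteq> {xs. length xs = k \<and> (\<forall>x\<in>set xs. x < size A)}"
    and "size A \<ge> 1" and "constI A ZeroS = 0"
    by blast+
  then show "size A \<ge> 1" "constI A ZeroS = 0"
    and "c \<in> cnsts \<tau> \<Longrightarrow> constI A c < size A" "c \<notin> cnsts \<tau> \<Longrightarrow> constI A c = 0"
    and "rels \<tau> r = None \<Longrightarrow> relI A r = {}"
    and "rels \<tau> r = Some k \<Longrightarrow> relI A r \<subseteq> {xs. length xs = k \<and> (\<forall>x\<in>set xs. x < size A)}"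
    by simp_all
qed

fun num_trm :: "nat \<Rightarrow> trm" where
  "num_trm 0 = Const ZeroS"
| "num_trm (Suc k) = Succ (num_trm k)"

lemma sig_trm_num_trm: "arithmetic_sig \<tau> \<Longrightarrow> sig_trm \<tau> (num_trm k)"
  by (induction k) (auto simp: arithmetic_sig_def)

lemma fv_trm_num_trm [simp]: "fv_trm (num_trm k) = {}"
  by (induction k) auto

lemma eval_num_trm: "A \<in> STRUC \<tau> \<Longrightarrow> eval_trm A e (num_trm k) = min k (size A - 1)"
  by (induction k) (auto simp: STRUC_D)

definition size_le_Suc_fm :: "nat \<Rightarrow> fm" where
  "size_le_Suc_fm n = Eq (num_trm n) (num_trm (Suc n))"

lemma sat_size_le_Suc_fm: "A \<in> STRUC \<tau> \<Longrightarrow> sat A e (size_le_Suc_fm n) \<longleftrightarrow> size A \<le> Suc n"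
  by (auto simp: size_le_Suc_fm_def eval_num_trm)

definition diagram_atoms :: "sig \<Rightarrow> nat \<Rightarrow> fm set" where
  "diagram_atoms \<tau> m =
     size_le_Suc_fm ` {..m} \<union>
     (\<Union>c\<in>cnsts \<tau>. (\<lambda>i. Eq (Const c) (num_trm i)) ` {..<m}) \<union>
     (\<Union>r\<in>dom (rels \<tau>). (\<lambda>xs. Rel r (map num_trm xs)) `
        {xs. set xs \<subseteq> {..<m} \<and> length xs = the (rels \<tau> r)})"

lemma finite_diagram_atoms: "arithmetic_sig \<tau> \<Longrightarrow> finite (diagram_atoms \<tau> m)"
  by (auto simp: diagram_atoms_def arithmetic_sig_def finite_lists_length_eq)

lemma size_le_Suc_fm_in_diagram_atoms: "i \<le> m \<Longrightarrow> size_le_Suc_fm i \<in> diagram_atoms \<tau> m"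
  unfolding diagram_atoms_def by blast

lemma const_atom_in_diagram_atoms:
  "c \<in> cnsts \<tau> \<Longrightarrow> i < m \<Longrightarrow> Eq (Const c) (num_trm i) \<in> diagram_atoms \<tau> m"
  unfolding diagram_atoms_def by blast

lemma rel_atom_in_diagram_atoms:
  assumes "rels \<tau> r = Some (length xs)" and "\<forall>x\<in>set xs. x < m"
  shows "Rel r (map num_trm xs) \<in> diagram_atoms \<tau> m"
proof -
  have "xs \<in> {xs. set xs \<subseteq> {..<m} \<and> length xs = the (rels \<tau> r)}"
    using assms by auto
  then show ?thesis
    using assms(1) unfolding diagram_atoms_def by blast
qed

lemma diagram_atoms_sentences:
  assumes "arithmetic_sig \<tau>" and "a \<in> diagram_atoms \<tau> m"
  shows "sig_fm \<tau> a \<and> qfree a \<and> fv a = {}"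
  using assms sig_trm_num_trm[OF assms(1)]
  by (auto simp: diagram_atoms_def size_le_Suc_fm_def arithmetic_sig_def)

context
  fixes \<tau> :: sig and m :: nat and A B :: struc
  assumes A: "A \<in> STRUC \<tau>" and B: "B \<in> STRUC \<tau>" and small: "size A \<le> m"
    and agree: "\<forall>a\<in>diagram_atoms \<tau> m. models A a \<longleftrightarrow> models B a"
begin

lemma diagram_agree_size: "size A = size B"
proof -
  have "models A (size_le_Suc_fm (size A - 1))"
    using sat_size_le_Suc_fm[OF A] by (simp add: models_def)
  then have "models B (size_le_Suc_fm (size A - 1))"
    using agree small size_le_Suc_fm_in_diagram_atoms by simp
  then have BA: "size B \<le> size A"
    using sat_size_le_Suc_fm[OF B] STRUC_D(1)[OF A] by (simp add: models_def)
  have "models B (size_le_Suc_fm (size B - 1))"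
    using sat_size_le_Suc_fm[OF B] by (simp add: models_def)
  then have "models A (size_le_Suc_fm (size B - 1))"
    using agree small BA size_le_Suc_fm_in_diagram_atoms by simp
  then have "size A \<le> size B"
    using sat_size_le_Suc_fm[OF A] STRUC_D(1)[OF B] by (simp add: models_def)
  with BA show ?thesis by simp
qed

lemma eval_num_trm_below_size:
  "x < size A \<Longrightarrow> eval_trm A e (num_trm x) = x \<and> eval_trm B e (num_trm x) = x"
  using eval_num_trm[OF A] eval_num_trm[OF B] diagram_agree_size by simp

lemma diagram_agree_const: "constI A c = constI B c"
proof (cases "c \<in> cnsts \<tau>")
  case True
  then have below: "constI A c < size A" "constI B c < size A"
    using STRUC_D(3)[OF A] STRUC_D(3)[OF B] diagram_agree_size by auto
  have "models A (Eq (Const c) (num_trm (constI A c)))"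
    using eval_num_trm_below_size below by (simp add: models_def)
  then have "models B (Eq (Const c) (num_trm (constI A c)))"
    using agree const_atom_in_diagram_atoms True below small by simp
  then show ?thesis
    using eval_num_trm_below_size below by (simp add: models_def)
next
  case False
  then show ?thesis using STRUC_D(4)[OF A] STRUC_D(4)[OF B] by simp
qed

lemma diagram_agree_rel: "relI A r = relI B r"
proof (cases "rels \<tau> r")
  case None
  then show ?thesis using STRUC_D(5)[OF A] STRUC_D(5)[OF B] by simp
next
  case (Some k)
  let ?tuples = "{xs. length xs = k \<and> (\<forall>x\<in>set xs. x < size A)}"
  have tuples: "relI A r \<subseteq> ?tuples" "relI B r \<subseteq> ?tuples"
    using STRUC_D(6)[OF A Some] STRUC_D(6)[OF B Some] diagram_agree_size by auto
  have "xs \<in> relI A r \<longleftrightarrow> xs \<in> relI B r" if xs: "xs \<in> ?tuples" for xs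
  proof -
    have "map (eval_trm C (\<lambda>_. 0)) (map num_trm xs) = xs" if "C \<in> {A, B}" for C
      using xs that eval_num_trm_below_size by (auto intro: map_idI)
    moreover have "Rel r (map num_trm xs) \<in> diagram_atoms \<tau> m"
      using xs Some small by (intro rel_atom_in_diagram_atoms) auto
    ultimately show ?thesis
      using agree by (fastforce simp: models_def)
  qed
  with tuples show ?thesis by blast
qed

lemma STRUC_eq_if_diagram_agree: "A = B"
  using diagram_agree_size diagram_agree_const diagram_agree_rel
  by (intro struc.equality) auto

end

fun shannon_fm :: "fm list \<Rightarrow> (bool list \<Rightarrow> bool) \<Rightarrow> fm" where
  "shannon_fm [] P =
     (if P [] then Eq (Const ZeroS) (Const ZeroS) else Neg (Eq (Const ZeroS) (Const ZeroS)))"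
| "shannon_fm (a # as) P =
     Disj (Conj a (shannon_fm as (\<lambda>v. P (True # v))))
          (Conj (Neg a) (shannon_fm as (\<lambda>v. P (False # v))))"

lemma sat_shannon_fm: "sat A e (shannon_fm as P) \<longleftrightarrow> P (map (sat A e) as)"
proof (induction as arbitrary: P)
  case (Cons a as)
  then show ?case by (cases "sat A e a") simp_all
qed simp

lemma shannon_fm_sentence:
  assumes "ZeroS \<in> cnsts \<tau>" and "\<forall>a\<in>set as. sig_fm \<tau> a \<and> qfree a \<and> fv a = {}"
  shows "sig_fm \<tau> (shannon_fm as P) \<and> qfree (shannon_fm as P) \<and> fv (shannon_fm as P) = {}"
  using assms(2) by (induction as arbitrary: P) (simp_all add: assms(1))

lemma small_structures_qfree_definable:
  assumes \<tau>: "arithmetic_sig \<tau>" and Q: "Q \<subseteq> STRUC \<tau>"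
  obtains \<beta> where "sig_fm \<tau> \<beta>" "qfree \<beta>" "fv \<beta> = {}"
    and "\<And>B. B \<in> STRUC \<tau> \<Longrightarrow> models B \<beta> \<longleftrightarrow> B \<in> Q \<and> size B \<le> m"
proof -
  obtain L where L: "set L = diagram_atoms \<tau> m"
    using finite_list[OF finite_diagram_atoms[OF \<tau>]] by blast
  define \<beta> where
    "\<beta> = shannon_fm L (\<lambda>v. \<exists>A\<in>Q. size A \<le> m \<and> map (models A) L = v)"
  have "sig_fm \<tau> \<beta> \<and> qfree \<beta> \<and> fv \<beta> = {}"
    unfolding \<beta>_def using \<tau> L diagram_atoms_sentences
    by (intro shannon_fm_sentence) (auto simp: arithmetic_sig_def)
  moreover have "models B \<beta> \<longleftrightarrow> B \<in> Q \<and> size B \<le> m" if B: "B \<in> STRUC \<tau>" for B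
  proof -
    have "models B \<beta> \<longleftrightarrow> (\<exists>A\<in>Q. size A \<le> m \<and> map (models A) L = map (models B) L)"
      unfolding \<beta>_def models_def sat_shannon_fm by (simp add: models_def[abs_def])
    also have "\<dots> \<longleftrightarrow> B \<in> Q \<and> size B \<le> m"
      using STRUC_eq_if_diagram_agree[OF _ B] Q L by (force simp: map_eq_conv)
    finally show ?thesis .
  qed
  ultimately show thesis using that by blast
qed

theorem lemma2p1:
  fixes \<tau> :: sig and Q :: "struc set" and \<phi> :: fm
  assumes "arithmetic_sig \<tau>"
    and "problem \<tau> Q"
    and "describes_eventually \<tau> \<phi> Q"
  shows "\<exists>\<alpha> \<beta>. sig_fm \<tau> \<alpha> \<and> qfree \<alpha> \<and> sig_fm \<tau> \<beta> \<and> qfree \<beta> \<and>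
           describes \<tau> (Disj (Conj \<alpha> \<phi>) \<beta>) Q"
proof -
  have Q: "Q \<subseteq> STRUC \<tau>" using assms(2) by (simp add: problem_def)
  obtain M where \<phi>: "sig_sentence \<tau> \<phi>"
    and large: "\<And>A. A \<in> STRUC \<tau> \<Longrightarrow> size A \<ge> M \<Longrightarrow> models A \<phi> \<longleftrightarrow> A \<in> Q"
    using assms(3) by (auto simp: describes_eventually_def)
  obtain \<beta> where \<beta>: "sig_fm \<tau> \<beta>" "qfree \<beta>" "fv \<beta> = {}"
    and small: "\<And>B. B \<in> STRUC \<tau> \<Longrightarrow> models B \<beta> \<longleftrightarrow> B \<in> Q \<and> size B \<le> Suc M"
    using small_structures_qfree_definable[OF assms(1) Q] by blast
  define \<alpha> where "\<alpha> = Neg (size_le_Suc_fm M)"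
  have \<alpha>: "sig_fm \<tau> \<alpha>" "qfree \<alpha>" "fv \<alpha> = {}"
    using assms(1) sig_trm_num_trm[OF assms(1)]
    by (auto simp: \<alpha>_def size_le_Suc_fm_def arithmetic_sig_def)
  have correct: "models B (Disj (Conj \<alpha> \<phi>) \<beta>) \<longleftrightarrow> B \<in> Q" if B: "B \<in> STRUC \<tau>" for B
  proof -
    have "models B (Disj (Conj \<alpha> \<phi>) \<beta>) \<longleftrightarrow>
        (Suc M < size B \<and> models B \<phi>) \<or> (B \<in> Q \<and> size B \<le> Suc M)"
      using small[OF B] sat_size_le_Suc_fm[OF B, of _ M]
      unfolding \<alpha>_def models_def by (simp add: not_le)
    then show ?thesis
      using large[OF B] by linarith
  qed
  have "describes \<tau> (Disj (Conj \<alpha> \<phi>) \<beta>) Q"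
    using \<alpha> \<beta> \<phi> Q correct unfolding describes_def sig_sentence_def by auto
  with \<alpha> \<beta> show ?thesis by blast
qed

end
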